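(* Let $n\ge1$, identify $\mathbb{R}^{n+1}=\mathbb{R}^n\times\mathbb{R}$, let $I$ be a finite nonempty index set and $f_i\colon\mathbb{R}^n\to(0,\infty)$ ($i\in I$) continuous functions with epigraphs $L_i=\{(x,y)\mid f_i(x)\le y\}$. Let $K\subset\mathbb{R}^{n+1}$ be a nonempty closed set containing a point whose last coordinate is $\le 0$, with $K\cap L_i=\emptyset$ for all $i\in I$. Let $f_{\min}(x)=\min\{f_i(x)\mid i\in I\}$, with epigraph $L=\bigcup_{i\in I}L_i$. Let $G_i^\pm$ be the upper/lower equidistant functions associated with $K$ and $L_i$, and $G_{\min}^\pm$ those associated with $K$ and $L$. Then for every $x\in\mathbb{R}^n$, $$\min\{G_i^-(x)\mid i\in I\}\le G_{\min}^-(x)\le G_{\min}^+(x)\le\min\{G_i^+(x)\mid i\in I\}.$$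
   Context: $d(p,A)=\inf\{|p-q|\mid q\in A\}$ (Euclidean distance). For a closed set $K$ and epigraph $M$ of a positive continuous function with $K\cap M=\emptyset$, the upper and lower equidistant functions are $G^+(x)=\sup\{y\mid d((x,y),K)=d((x,y),M)\}$ and $G^-(x)=\inf\{y\mid d((x,y),K)=d((x,y),M)\}$ (these are real numbers under the stated assumptions). *)

theory Defs
  imports "HOL-Analysis.Analysis"
begin

text \<open>R^(n+1) is modelled as the product (real^'n) \<times> real; the product metric
  in HOL-Analysis is the Euclidean one: dist (a,b) (c,d) = sqrt (dist a c ^ 2 + dist b d ^ 2).\<close>

definition epigraph :: "('a \<Rightarrow> real) \<Rightarrow> ('a \<times> real) set" where
  "epigraph g = {(x, y). g x \<le> y}"

definition equi_set :: "('a::metric_space \<times> real) set \<Rightarrow> ('a \<times> real) set \<Rightarrow> 'a \<Rightarrow> real set" where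
  "equi_set K M x = {y. infdist (x, y) K = infdist (x, y) M}"

definition G_plus :: "('a::metric_space \<times> real) set \<Rightarrow> ('a \<times> real) set \<Rightarrow> 'a \<Rightarrow> real" where
  "G_plus K M x = Sup (equi_set K M x)"

definition G_minus :: "('a::metric_space \<times> real) set \<Rightarrow> ('a \<times> real) set \<Rightarrow> 'a \<Rightarrow> real" where
  "G_minus K M x = Inf (equi_set K M x)"

end

theory Submission
  imports Defs
begin

(* For fixed x, the gap y \<mapsto> d((x,y),K) - d((x,y),M) between the distances to K and to an
   epigraph M is continuous, positive for y \<ge> f x (there (x,y) \<in> M, which is disjoint from the
   closed set K) and negative far below (a point of K at height \<le> 0 is then closer than M, since
   f has a positive minimum near x).  So it is negative below G\<^sup>- and positive above G\<^sup>+.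
   For L = \<Union>\<^sub>i L\<^sub>i we have d(p,L) = min\<^sub>i d(p,L\<^sub>i): an equidistant point of K and L above some
   G\<^sub>i\<^sup>+ would be closer to L\<^sub>i, hence to L, than to K, and one below every G\<^sub>i\<^sup>- would be
   closer to K than to each L\<^sub>i, hence than to L. *)

lemma continuous_on_Min_finite:
  fixes f :: "'i \<Rightarrow> 'a::topological_space \<Rightarrow> 'b::linorder_topology"
  assumes "finite I" "I \<noteq> {}" "\<And>i. i \<in> I \<Longrightarrow> continuous_on S (f i)"
  shows "continuous_on S (\<lambda>z. Min ((\<lambda>i. f i z) ` I))"
  using assms
proof (induction I rule: finite_ne_induct)
  case (singleton i)
  then show ?case by simp
next
  case (insert i I)
  then show ?case by (simp add: continuous_on_min)
qed

lemma infdist_UN_finite: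
  assumes "finite I" "I \<noteq> {}" "\<And>i. i \<in> I \<Longrightarrow> A i \<noteq> {}"
  shows "infdist x (\<Union>i\<in>I. A i) = Min ((\<lambda>i. infdist x (A i)) ` I)"
  using assms
proof (induction I rule: finite_ne_induct)
  case (singleton i)
  then show ?case by simp
next
  case (insert i I)
  then show ?case by (simp add: infdist_Un_min)
qed

lemma epigraph_Min:
  assumes "finite I" "I \<noteq> {}"
  shows "epigraph (\<lambda>z. Min ((\<lambda>i. f i z) ` I)) = (\<Union>i\<in>I. epigraph (f i))"
  using assms by (auto simp: epigraph_def Min_le_iff)

lemma epigraph_nonempty: "epigraph f \<noteq> {}"
  by (auto simp: epigraph_def)

lemma infdist_epigraph_ge:
  fixes f :: "'a::metric_space \<Rightarrow> real"
  assumes nonneg: "\<And>z. 0 \<le> f z" and lower: "\<And>z. z \<in> cball x R \<Longrightarrow> c \<le> f z"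
    and "0 \<le> R" "y \<le> 0"
  shows "min (c - y) (sqrt (R\<^sup>2 + y\<^sup>2)) \<le> infdist (x, y) (epigraph f)"
  unfolding infdist_notempty[OF epigraph_nonempty]
proof (rule cINF_greatest[OF epigraph_nonempty])
  fix p assume "p \<in> epigraph f"
  then obtain x' y' where p: "p = (x', y')" "f x' \<le> y'" by (auto simp: epigraph_def)
  show "min (c - y) (sqrt (R\<^sup>2 + y\<^sup>2)) \<le> dist (x, y) p"
  proof (cases "dist x x' \<le> R")
    case True
    then have "c - y \<le> dist y y'"
      using lower[of x'] p by (simp add: dist_real_def)
    also have "\<dots> \<le> dist (x, y) p"
      using dist_snd_le[of "(x, y)" p] p by simp
    finally show ?thesis by simp
  next
    case False
    have "\<bar>y\<bar> \<le> dist y y'"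
      using nonneg[of x'] p \<open>y \<le> 0\<close> by (simp add: dist_real_def)
    then have "y\<^sup>2 \<le> (dist y y')\<^sup>2"
      by (simp add: abs_le_square_iff[symmetric])
    moreover have "R\<^sup>2 \<le> (dist x x')\<^sup>2"
      using False \<open>0 \<le> R\<close> by (intro power_mono) auto
    ultimately have "R\<^sup>2 + y\<^sup>2 \<le> (dist x x')\<^sup>2 + (dist y y')\<^sup>2"
      by simp
    then have "sqrt (R\<^sup>2 + y\<^sup>2) \<le> dist (x, y) p"
      by (simp add: p dist_Pair_Pair)
    then show ?thesis by simp
  qed
qed

lemma sqrt_add_square_less:
  fixes a c y :: real
  assumes "0 < c" "y \<le> - (a\<^sup>2 / (2 * c))"
  shows "sqrt (a\<^sup>2 + y\<^sup>2) < c - y"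
proof (rule real_less_lsqrt)
  have "a\<^sup>2 \<le> - (2 * c * y)"
    using assms by (simp add: field_simps)
  moreover have "0 < c\<^sup>2"
    using \<open>0 < c\<close> by simp
  ultimately show "a\<^sup>2 + y\<^sup>2 < (c - y)\<^sup>2"
    using power2_diff[of c y] by linarith
  have "0 \<le> a\<^sup>2 / (2 * c)"
    using \<open>0 < c\<close> by simp
  then show "0 \<le> c - y"
    using assms by linarith
qed

lemma eventually_infdist_less_infdist_epigraph:
  fixes f :: "'a::heine_borel \<Rightarrow> real"
  assumes cont: "continuous_on UNIV f" and pos: "\<And>z. 0 < f z"
    and q: "q \<in> K" "snd q \<le> 0"
  shows "\<forall>\<^sub>F y in at_bot. infdist (x, y) K < infdist (x, y) (epigraph f)"
proof -
  obtain q1 q2 where q_eq: "q = (q1, q2)" by fastforce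
  define a where "a = dist x q1"
  define R where "R = a + 1"
  have "0 \<le> a" by (simp add: a_def)
  then have "\<exists>z0\<in>cball x R. \<forall>z\<in>cball x R. f z0 \<le> f z"
    by (intro continuous_attains_inf continuous_on_subset[OF cont]) (auto simp: R_def)
  then obtain z0 where z0: "\<And>z. z \<in> cball x R \<Longrightarrow> f z0 \<le> f z"
    by blast
  define c where "c = f z0"
  have "0 < c" by (simp add: c_def pos)
  \<comment> \<open>Points of the epigraph over cball x R lie at height \<open>\<ge> c\<close>, the others are horizontally
    farther than R from x; q is horizontally within a < R.\<close>
  have "infdist (x, y) K < infdist (x, y) (epigraph f)"
    if y: "y \<le> min q2 (- (a\<^sup>2 / (2 * c)))" for y
  proof -
    have "y \<le> q2" "q2 \<le> 0" using y q q_eq by auto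
    then have "(dist y q2)\<^sup>2 \<le> y\<^sup>2"
      by (simp add: dist_real_def abs_le_square_iff[symmetric])
    then have "infdist (x, y) K \<le> sqrt (a\<^sup>2 + y\<^sup>2)"
      using q(1) by (intro infdist_le2) (auto simp: q_eq dist_Pair_Pair a_def)
    also have "\<dots> < min (c - y) (sqrt (R\<^sup>2 + y\<^sup>2))"
      using sqrt_add_square_less[OF \<open>0 < c\<close>] y \<open>0 \<le> a\<close>
      by (simp add: R_def power_strict_mono)
    also have "\<dots> \<le> infdist (x, y) (epigraph f)"
      using z0 pos \<open>0 \<le> a\<close> \<open>y \<le> q2\<close> \<open>q2 \<le> 0\<close> unfolding c_def R_def
      by (intro infdist_epigraph_ge) (auto intro: less_imp_le)
    finally show ?thesis .
  qed
  then show ?thesis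
    unfolding eventually_at_bot_linorder by blast
qed

context
  fixes \<phi> :: "real \<Rightarrow> real"
  assumes continuous: "continuous_on UNIV \<phi>"
    and neg_at_bot: "\<forall>\<^sub>F y in at_bot. \<phi> y < 0"
    and pos_at_top: "\<forall>\<^sub>F y in at_top. 0 < \<phi> y"
begin

lemma zero_above_nonpos:
  assumes "\<phi> y \<le> 0"
  shows "\<exists>z\<ge>y. \<phi> z = 0"
proof -
  obtain N where "\<And>z. N \<le> z \<Longrightarrow> 0 < \<phi> z"
    using pos_at_top by (auto simp: eventually_at_top_linorder)
  then have "0 \<le> \<phi> (max y N)"
    by (simp add: less_imp_le)
  then have "\<exists>z. y \<le> z \<and> z \<le> max y N \<and> \<phi> z = 0"
    using assms continuous_on_subset[OF continuous subset_UNIV] by (intro IVT') auto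
  then show ?thesis
    by blast
qed

lemma zero_below_nonneg:
  assumes "0 \<le> \<phi> y"
  shows "\<exists>z\<le>y. \<phi> z = 0"
proof -
  obtain N where "\<And>z. z \<le> N \<Longrightarrow> \<phi> z < 0"
    using neg_at_bot by (auto simp: eventually_at_bot_linorder)
  then have "\<phi> (min y N) \<le> 0"
    by (simp add: less_imp_le)
  then have "\<exists>z. min y N \<le> z \<and> z \<le> y \<and> \<phi> z = 0"
    using assms continuous_on_subset[OF continuous subset_UNIV] by (intro IVT') auto
  then show ?thesis
    by blast
qed

lemma zeros_nonempty: "{y. \<phi> y = 0} \<noteq> {}"
  using zero_above_nonpos[of 0] zero_below_nonneg[of 0] by force

lemma zeros_bdd_above: "bdd_above {y. \<phi> y = 0}"
proof -
  obtain T where T: "\<And>y. T \<le> y \<Longrightarrow> 0 < \<phi> y"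
    using pos_at_top by (auto simp: eventually_at_top_linorder)
  have "y \<le> T" if "\<phi> y = 0" for y
    using T[of y] that by (cases "T \<le> y") auto
  then show ?thesis
    by (intro bdd_aboveI[of _ T]) simp
qed

lemma zeros_bdd_below: "bdd_below {y. \<phi> y = 0}"
proof -
  obtain Y where Y: "\<And>y. y \<le> Y \<Longrightarrow> \<phi> y < 0"
    using neg_at_bot by (auto simp: eventually_at_bot_linorder)
  have "Y \<le> y" if "\<phi> y = 0" for y
    using Y[of y] that by (cases "y \<le> Y") auto
  then show ?thesis
    by (intro bdd_belowI[of _ Y]) simp
qed

lemma pos_above_Sup_zeros:
  assumes "Sup {y. \<phi> y = 0} < y"
  shows "0 < \<phi> y"
proof (rule ccontr)
  assume "\<not> 0 < \<phi> y"
  then obtain z where "y \<le> z" "\<phi> z = 0"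
    using zero_above_nonpos[of y] by auto
  then have "z \<le> Sup {y. \<phi> y = 0}"
    by (intro cSup_upper zeros_bdd_above) simp
  with assms \<open>y \<le> z\<close> show False
    by simp
qed

lemma neg_below_Inf_zeros:
  assumes "y < Inf {y. \<phi> y = 0}"
  shows "\<phi> y < 0"
proof (rule ccontr)
  assume "\<not> \<phi> y < 0"
  then obtain z where "z \<le> y" "\<phi> z = 0"
    using zero_below_nonneg[of y] by auto
  then have "Inf {y. \<phi> y = 0} \<le> z"
    by (intro cInf_lower zeros_bdd_below) simp
  with assms \<open>z \<le> y\<close> show False
    by simp
qed

end

locale epigraph_equidistance =
  fixes K :: "('a::heine_borel \<times> real) set" and f :: "'a \<Rightarrow> real"
  assumes f_continuous: "continuous_on UNIV f"
    and f_pos: "\<And>z. 0 < f z"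
    and K_closed: "closed K"
    and K_low_point: "\<exists>p\<in>K. snd p \<le> 0"
    and K_disjoint: "K \<inter> epigraph f = {}"
begin

definition distance_gap :: "'a \<Rightarrow> real \<Rightarrow> real" where
  "distance_gap x y = infdist (x, y) K - infdist (x, y) (epigraph f)"

lemma equi_set_eq_zeros: "equi_set K (epigraph f) x = {y. distance_gap x y = 0}"
  by (simp add: equi_set_def distance_gap_def)

lemma distance_gap_continuous: "continuous_on UNIV (distance_gap x)"
  unfolding distance_gap_def by (intro continuous_intros)

lemma distance_gap_neg_at_bot: "\<forall>\<^sub>F y in at_bot. distance_gap x y < 0"
proof -
  obtain q where "q \<in> K" "snd q \<le> 0"
    using K_low_point by blast
  then show ?thesis
    using eventually_infdist_less_infdist_epigraph[OF f_continuous f_pos]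
    by (simp add: distance_gap_def)
qed

lemma distance_gap_pos_at_top: "\<forall>\<^sub>F y in at_top. 0 < distance_gap x y"
  unfolding eventually_at_top_linorder
proof (intro exI allI impI)
  fix y assume "f x \<le> y"
  then have "(x, y) \<in> epigraph f" "(x, y) \<notin> K"
    using K_disjoint by (auto simp: epigraph_def)
  moreover have "K \<noteq> {}"
    using K_low_point by blast
  ultimately show "0 < distance_gap x y"
    using infdist_pos_not_in_closed[OF K_closed] by (simp add: distance_gap_def)
qed

lemmas distance_gap_sign =
  distance_gap_continuous distance_gap_neg_at_bot distance_gap_pos_at_top

lemma equi_set_nonempty: "equi_set K (epigraph f) x \<noteq> {}"
  unfolding equi_set_eq_zeros using zeros_nonempty[OF distance_gap_sign] .

lemma G_minus_le_G_plus: "G_minus K (epigraph f) x \<le> G_plus K (epigraph f) x"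
  unfolding G_minus_def G_plus_def equi_set_eq_zeros
  by (intro cInf_le_cSup zeros_nonempty zeros_bdd_above zeros_bdd_below distance_gap_sign)

lemma infdist_epigraph_less_above_G_plus:
  assumes "G_plus K (epigraph f) x < y"
  shows "infdist (x, y) (epigraph f) < infdist (x, y) K"
  using pos_above_Sup_zeros[OF distance_gap_sign] assms
  by (simp add: G_plus_def equi_set_eq_zeros distance_gap_def)

lemma infdist_less_below_G_minus:
  assumes "y < G_minus K (epigraph f) x"
  shows "infdist (x, y) K < infdist (x, y) (epigraph f)"
  using neg_below_Inf_zeros[OF distance_gap_sign] assms
  by (simp add: G_minus_def equi_set_eq_zeros distance_gap_def)

end

lemma G_plus_le_G_plus_subset:
  assumes "equi_set K M x \<noteq> {}" "M' \<subseteq> M" "M' \<noteq> {}"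
    and above: "\<And>y. G_plus K M' x < y \<Longrightarrow> infdist (x, y) M' < infdist (x, y) K"
  shows "G_plus K M x \<le> G_plus K M' x"
  unfolding G_plus_def[of K M]
proof (rule cSup_least[OF assms(1)])
  fix y assume "y \<in> equi_set K M x"
  then have "infdist (x, y) K \<le> infdist (x, y) M'"
    using infdist_mono[OF assms(2,3)] by (simp add: equi_set_def)
  then show "y \<le> G_plus K M' x"
    using above[of y] by force
qed

lemma Min_G_minus_le_G_minus_UN:
  assumes I: "finite I" "I \<noteq> {}" and "equi_set K (\<Union>i\<in>I. M i) x \<noteq> {}"
    and M_nonempty: "\<And>i. i \<in> I \<Longrightarrow> M i \<noteq> {}"
    and below: "\<And>i y. i \<in> I \<Longrightarrow> y < G_minus K (M i) x \<Longrightarrow> infdist (x, y) K < infdist (x, y) (M i)"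
  shows "Min ((\<lambda>i. G_minus K (M i) x) ` I) \<le> G_minus K (\<Union>i\<in>I. M i) x"
  unfolding G_minus_def[of K "\<Union>i\<in>I. M i"]
proof (rule cInf_greatest[OF assms(3)])
  fix y assume y: "y \<in> equi_set K (\<Union>i\<in>I. M i) x"
  show "Min ((\<lambda>i. G_minus K (M i) x) ` I) \<le> y"
  proof (rule ccontr)
    assume "\<not> ?thesis"
    then have "\<forall>i\<in>I. infdist (x, y) K < infdist (x, y) (M i)"
      using below I by (simp add: not_le)
    then have "infdist (x, y) K < infdist (x, y) (\<Union>i\<in>I. M i)"
      using I M_nonempty by (simp add: infdist_UN_finite)
    with y show False
      by (simp add: equi_set_def)
  qed
qed

theorem theorem2:
  fixes I :: "'i set" and f :: "'i \<Rightarrow> (real^'n) \<Rightarrow> real"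
    and K :: "((real^'n) \<times> real) set" and x :: "real^'n"
  assumes "finite I" and "I \<noteq> {}"
    and "\<And>i. i \<in> I \<Longrightarrow> continuous_on UNIV (f i)"
    and "\<And>i z. i \<in> I \<Longrightarrow> f i z > 0"
    and "closed K" and "K \<noteq> {}" and "\<exists>p\<in>K. snd p \<le> 0"
    and "\<And>i. i \<in> I \<Longrightarrow> K \<inter> epigraph (f i) = {}"
  shows "Min ((\<lambda>i. G_minus K (epigraph (f i)) x) ` I)
           \<le> G_minus K (epigraph (\<lambda>z. Min ((\<lambda>i. f i z) ` I))) x
       \<and> G_minus K (epigraph (\<lambda>z. Min ((\<lambda>i. f i z) ` I))) x
           \<le> G_plus K (epigraph (\<lambda>z. Min ((\<lambda>i. f i z) ` I))) x
       \<and> G_plus K (epigraph (\<lambda>z. Min ((\<lambda>i. f i z) ` I))) x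
           \<le> Min ((\<lambda>i. G_plus K (epigraph (f i)) x) ` I)"
proof -
  let ?F = "\<lambda>z. Min ((\<lambda>i. f i z) ` I)"
  have epigraph_F: "epigraph ?F = (\<Union>i\<in>I. epigraph (f i))"
    using assms(1,2) by (rule epigraph_Min)
  have f_i: "epigraph_equidistance K (f i)" if "i \<in> I" for i
    using that by unfold_locales (simp_all add: assms(3,4,5,7,8))
  interpret F: epigraph_equidistance K ?F
  proof
    show "continuous_on UNIV ?F"
      using assms(1-3) by (rule continuous_on_Min_finite)
    show "0 < ?F z" for z
      using assms(1,2,4) by simp
    show "K \<inter> epigraph ?F = {}"
      using assms(8) by (auto simp: epigraph_F)
  qed (use assms(5,7) in auto)
  have "Min ((\<lambda>i. G_minus K (epigraph (f i)) x) ` I) \<le> G_minus K (epigraph ?F) x"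
    unfolding epigraph_F
    using assms(1,2) F.equi_set_nonempty[of x]
      epigraph_equidistance.infdist_less_below_G_minus[OF f_i]
    by (intro Min_G_minus_le_G_minus_UN) (auto simp: epigraph_F epigraph_nonempty)
  moreover have "G_plus K (epigraph ?F) x \<le> Min ((\<lambda>i. G_plus K (epigraph (f i)) x) ` I)"
    using assms(1,2) F.equi_set_nonempty[of x]
      epigraph_equidistance.infdist_epigraph_less_above_G_plus[OF f_i]
    by (auto simp: epigraph_F epigraph_nonempty intro!: G_plus_le_G_plus_subset)
  ultimately show ?thesis
    using F.G_minus_le_G_plus by blast
qed

end
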